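(* BC, MS and FT satisfy clearance: for every finite candidate set $C$, every profile $P$ over $C$ and every candidate $x\in C$ approved by no ballot of $P$, every axis $\triangleleft\in f(P)$ is such that there is no ballot $A\in P$ and $y,z\in A$ with $y\triangleleft x\triangleleft z$. VD and MF fail clearance: for each $f\in\{\mathrm{VD},\mathrm{MF}\}$ there exist $C$, a profile $P$, a never-approved candidate $x$, an axis $\triangleleft\in f(P)$ and a ballot $A\in P$ with $y,z\in A$ and $y\triangleleft x\triangleleft z$.
   Context: Let $C$ be a finite set of candidates. An approval ballot is a nonempty subset $A\subseteq C$; a profile is a finite sequence of ballots. An axis is a strict linear order $\triangleleft$ on $C$; $a\trianglelefteq b$ means $a\triangleleft b$ or $a=b$. A ballot $A$ is an interval of $\triangleleft$ if for all $a,b\in A$ and every $c$ with $a\triangleleft c\triangleleft b$ we have $c\in A$. For a cost function $\mathrm{cost}_f$, the scoring rule returns $f(P)=\arg\min_{\triangleleft}\sum_{A\in P}\mathrm{cost}_f(A,\triangleleft)$ over all axes on $C$. The five rules are the scoring rules with costs: $\mathrm{cost}_{\mathrm{VD}}(A,\triangleleft)=0$ if $A$ is an interval of $\triangleleft$ and $1$ otherwise; $\mathrm{cost}_{\mathrm{MF}}(A,\triangleleft)=\min_{x,y\in A,\ x\trianglelefteq y}\big(|\{z\in A: z\triangleleft x \text{ or } y\triangleleft z\}|+|\{z\notin A: x\triangleleft z\triangleleft y\}|\big)$; $\mathrm{cost}_{\mathrm{BC}}(A,\triangleleft)=|\{b\notin A: a\triangleleft b\triangleleft c \text{ for some } a,c\in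 A\}|$; $\mathrm{cost}_{\mathrm{MS}}(A,\triangleleft)=\sum_{x\in C\setminus A}\min\big(|\{y\in A:y\triangleleft x\}|,\,|\{y\in A:x\triangleleft y\}|\big)$; $\mathrm{cost}_{\mathrm{FT}}(A,\triangleleft)=\sum_{x\in C\setminus A}|\{y\in A:y\triangleleft x\}|\cdot|\{y\in A:x\triangleleft y\}|$. *)

theory Defs
  imports Main
begin

text \<open>An axis on C is a strict linear order on C, represented as a relation r with
r \<subseteq> C \<times> C; (a,b) \<in> r means a is left of b on the axis.\<close>

definition axes :: "'a set \<Rightarrow> 'a rel set" where
  "axes C = {r. strict_linear_order_on C r \<and> r \<subseteq> C \<times> C}"

definition is_profile :: "'a set \<Rightarrow> 'a set list \<Rightarrow> bool" where
  "is_profile C P \<longleftrightarrow> (\<forall>A\<in>set P. A \<noteq> {} \<and> A \<subseteq> C)"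

definition is_interval :: "'a set \<Rightarrow> 'a rel \<Rightarrow> bool" where
  "is_interval A r \<longleftrightarrow> (\<forall>a\<in>A. \<forall>b\<in>A. \<forall>c. (a,c) \<in> r \<and> (c,b) \<in> r \<longrightarrow> c \<in> A)"

definition cost_VD :: "'a set \<Rightarrow> 'a set \<Rightarrow> 'a rel \<Rightarrow> nat" where
  "cost_VD C A r = (if is_interval A r then 0 else 1)"

definition cost_MF :: "'a set \<Rightarrow> 'a set \<Rightarrow> 'a rel \<Rightarrow> nat" where
  "cost_MF C A r = Min {card {z\<in>A. (z,x) \<in> r \<or> (y,z) \<in> r}
                        + card {z\<in>C. z \<notin> A \<and> (x,z) \<in> r \<and> (z,y) \<in> r}
                       | x y. x \<in> A \<and> y \<in> A \<and> (x = y \<or> (x,y) \<in> r)}"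

definition cost_BC :: "'a set \<Rightarrow> 'a set \<Rightarrow> 'a rel \<Rightarrow> nat" where
  "cost_BC C A r = card {b\<in>C. b \<notin> A \<and> (\<exists>a\<in>A. \<exists>c\<in>A. (a,b) \<in> r \<and> (b,c) \<in> r)}"

definition cost_MS :: "'a set \<Rightarrow> 'a set \<Rightarrow> 'a rel \<Rightarrow> nat" where
  "cost_MS C A r = (\<Sum>x\<in>C - A. min (card {y\<in>A. (y,x) \<in> r}) (card {y\<in>A. (x,y) \<in> r}))"

definition cost_FT :: "'a set \<Rightarrow> 'a set \<Rightarrow> 'a rel \<Rightarrow> nat" where
  "cost_FT C A r = (\<Sum>x\<in>C - A. card {y\<in>A. (y,x) \<in> r} * card {y\<in>A. (x,y) \<in> r})"

definition scoring_rule ::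
  "('a set \<Rightarrow> 'a set \<Rightarrow> 'a rel \<Rightarrow> nat) \<Rightarrow> 'a set \<Rightarrow> 'a set list \<Rightarrow> 'a rel set" where
  "scoring_rule cost C P =
     {r \<in> axes C. \<forall>r' \<in> axes C.
        (\<Sum>A\<leftarrow>P. cost C A r) \<le> (\<Sum>A\<leftarrow>P. cost C A r')}"

definition clearance :: "('a set \<Rightarrow> 'a set \<Rightarrow> 'a rel \<Rightarrow> nat) \<Rightarrow> bool" where
  "clearance cost \<longleftrightarrow>
     (\<forall>C P x. finite C \<and> is_profile C P \<and> x \<in> C \<and> (\<forall>A\<in>set P. x \<notin> A) \<longrightarrow>
        (\<forall>r \<in> scoring_rule cost C P.
           \<not> (\<exists>A\<in>set P. \<exists>y\<in>A. \<exists>z\<in>A. (y,x) \<in> r \<and> (x,z) \<in> r)))"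

end

theory Submission
  imports Defs
begin

text \<open>Moving a never-approved candidate x to the left end of an axis keeps the relative order of
all other candidates, so for BC, MS and FT it does not increase the cost of any ballot, and it
strictly decreases the cost of a ballot that x used to split: for BC x leaves the set of gaps, for MS
and FT the term of x drops from a positive value to 0. Hence an optimal axis never places x inside a
ballot. For VD and MF consider the ballots {0,1}, {0,2}, {0,3} and the unapproved candidate 4. As 0 has
at most two neighbours, every axis breaks one of these intervals and so costs at least 1, while the
axis 1 0 2 4 3 costs exactly 1 and puts 4 between 0 and 3.\<close>

definition move_to_front :: "'a set \<Rightarrow> 'a \<Rightarrow> 'a rel \<Rightarrow> 'a rel" where
  "move_to_front C x r = {(u,v) \<in> r. u \<noteq> x \<and> v \<noteq> x} \<union> {(x,v) | v. v \<in> C \<and> v \<noteq> x}"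

lemma move_to_front_axes:
  assumes "r \<in> axes C" "x \<in> C"
  shows "move_to_front C x r \<in> axes C"
  using assms unfolding axes_def strict_linear_order_on_def move_to_front_def
    trans_def irrefl_def total_on_def
  by blast

lemma not_left_of_move_to_front: "(y,x) \<notin> move_to_front C x r"
  unfolding move_to_front_def by auto

lemma sum_list_strict_mono_ex1:
  fixes f g :: "'a \<Rightarrow> nat"
  assumes "\<And>B. B \<in> set P \<Longrightarrow> f B \<le> g B" "A \<in> set P" "f A < g A"
  shows "(\<Sum>B\<leftarrow>P. f B) < (\<Sum>B\<leftarrow>P. g B)"
proof -
  have "(\<Sum>B\<leftarrow>remove1 A P. f B) \<le> (\<Sum>B\<leftarrow>remove1 A P. g B)"
    using assms(1) by (intro sum_list_mono) (meson notin_set_remove1)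
  then show ?thesis
    using assms(2,3) by (simp add: sum_list_map_remove1[of A])
qed

lemma clearanceI_move_to_front:
  assumes mono: "\<And>C B x r. finite C \<Longrightarrow> r \<in> axes C \<Longrightarrow> x \<in> C \<Longrightarrow> B \<subseteq> C \<Longrightarrow> x \<notin> B
      \<Longrightarrow> cost C B (move_to_front C x r) \<le> cost C B r"
    and strict: "\<And>C B x r y z. finite C \<Longrightarrow> r \<in> axes C \<Longrightarrow> x \<in> C \<Longrightarrow> B \<subseteq> C \<Longrightarrow> x \<notin> B
      \<Longrightarrow> y \<in> B \<Longrightarrow> z \<in> B \<Longrightarrow> (y,x) \<in> r \<Longrightarrow> (x,z) \<in> r
      \<Longrightarrow> cost C B (move_to_front C x r) < cost C B r"
  shows "clearance cost"
  unfolding clearance_def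
proof (intro allI impI ballI notI)
  fix C P x r
  assume h: "finite C \<and> is_profile C P \<and> x \<in> C \<and> (\<forall>A\<in>set P. x \<notin> A)"
    and r: "r \<in> scoring_rule cost C P"
    and "\<exists>A\<in>set P. \<exists>y\<in>A. \<exists>z\<in>A. (y, x) \<in> r \<and> (x, z) \<in> r"
  then obtain A y z where A: "A \<in> set P" "y \<in> A" "z \<in> A" "(y,x) \<in> r" "(x,z) \<in> r"
    by blast
  have ax: "r \<in> axes C"
    and opt: "\<And>r'. r' \<in> axes C \<Longrightarrow> (\<Sum>B\<leftarrow>P. cost C B r) \<le> (\<Sum>B\<leftarrow>P. cost C B r')"
    using r unfolding scoring_rule_def by auto
  have "x \<in> C"
    using h by blast
  have ballots: "\<And>B. B \<in> set P \<Longrightarrow> B \<subseteq> C \<and> x \<notin> B"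
    using h unfolding is_profile_def by auto
  have "(\<Sum>B\<leftarrow>P. cost C B (move_to_front C x r)) < (\<Sum>B\<leftarrow>P. cost C B r)"
  proof (rule sum_list_strict_mono_ex1)
    show "cost C B (move_to_front C x r) \<le> cost C B r" if "B \<in> set P" for B
      using mono h ax ballots[OF that] by blast
    show "cost C A (move_to_front C x r) < cost C A r"
      using strict[of C r x A y z] h ax ballots[OF A(1)] A by blast
  qed (rule A(1))
  with opt[OF move_to_front_axes[OF ax \<open>x \<in> C\<close>]] show False
    by linarith
qed

lemma cost_BC_move_to_front:
  assumes "x \<notin> B"
  shows "cost_BC C B (move_to_front C x r)
       = card ({b\<in>C. b \<notin> B \<and> (\<exists>a\<in>B. \<exists>c\<in>B. (a,b) \<in> r \<and> (b,c) \<in> r)} - {x})"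
proof -
  have "{b\<in>C. b \<notin> B \<and> (\<exists>a\<in>B. \<exists>c\<in>B. (a,b) \<in> move_to_front C x r \<and> (b,c) \<in> move_to_front C x r)}
      = {b\<in>C. b \<notin> B \<and> (\<exists>a\<in>B. \<exists>c\<in>B. (a,b) \<in> r \<and> (b,c) \<in> r)} - {x}"
    using assms unfolding move_to_front_def by auto
  then show ?thesis
    unfolding cost_BC_def by simp
qed

lemma cost_BC_clearance: "clearance cost_BC"
proof (rule clearanceI_move_to_front)
  fix C B :: "'a set" and x :: 'a and r :: "'a rel"
  assume "finite C" "x \<notin> B"
  then show "cost_BC C B (move_to_front C x r) \<le> cost_BC C B r"
    unfolding cost_BC_move_to_front[OF \<open>x \<notin> B\<close>] unfolding cost_BC_def
    by (intro card_mono) auto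
next
  fix C B :: "'a set" and x y z :: 'a and r :: "'a rel"
  assume "finite C" "x \<in> C" "x \<notin> B" "y \<in> B" "z \<in> B" "(y,x) \<in> r" "(x,z) \<in> r"
  then show "cost_BC C B (move_to_front C x r) < cost_BC C B r"
    unfolding cost_BC_move_to_front[OF \<open>x \<notin> B\<close>] unfolding cost_BC_def
    by (intro card_Diff1_less) auto
qed

definition separation_cost :: "(nat \<Rightarrow> nat \<Rightarrow> nat) \<Rightarrow> 'a set \<Rightarrow> 'a set \<Rightarrow> 'a rel \<Rightarrow> nat" where
  "separation_cost g C A r = (\<Sum>x\<in>C - A. g (card {y\<in>A. (y,x) \<in> r}) (card {y\<in>A. (x,y) \<in> r}))"

lemma cost_MS_eq_separation_cost: "cost_MS = separation_cost min"
  by (intro ext) (simp add: cost_MS_def separation_cost_def)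

lemma cost_FT_eq_separation_cost: "cost_FT = separation_cost (*)"
  by (intro ext) (simp add: cost_FT_def separation_cost_def)

lemma separation_cost_move_to_front:
  assumes zero: "\<And>n. g 0 n = 0" and "finite C" "x \<notin> B"
  shows "separation_cost g C B (move_to_front C x r)
       = (\<Sum>b\<in>C - B - {x}. g (card {y\<in>B. (y,b) \<in> r}) (card {y\<in>B. (b,y) \<in> r}))"
proof -
  have sides: "{y\<in>B. (y,b) \<in> move_to_front C x r} = {y\<in>B. (y,b) \<in> r}"
              "{y\<in>B. (b,y) \<in> move_to_front C x r} = {y\<in>B. (b,y) \<in> r}" if "b \<noteq> x" for b
    using that \<open>x \<notin> B\<close> unfolding move_to_front_def by auto
  have "separation_cost g C B (move_to_front C x r)
      = (\<Sum>b\<in>C - B - {x}. g (card {y\<in>B. (y,b) \<in> move_to_front C x r})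
                              (card {y\<in>B. (b,y) \<in> move_to_front C x r}))"
    unfolding separation_cost_def using \<open>finite C\<close>
    by (intro sum.mono_neutral_right) (auto simp: not_left_of_move_to_front zero)
  also have "\<dots> = (\<Sum>b\<in>C - B - {x}. g (card {y\<in>B. (y,b) \<in> r}) (card {y\<in>B. (b,y) \<in> r}))"
    using sides by (intro sum.cong) simp_all
  finally show ?thesis .
qed

lemma separation_cost_clearance:
  assumes zero: "\<And>n. g 0 n = 0" and pos: "\<And>l n. 0 < l \<Longrightarrow> 0 < n \<Longrightarrow> 0 < g l n"
  shows "clearance (separation_cost g)"
proof (rule clearanceI_move_to_front)
  fix C B :: "'a set" and x :: 'a and r :: "'a rel"
  assume "finite C" "x \<notin> B"
  then have "separation_cost g C B (move_to_front C x r)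
      = (\<Sum>b\<in>C - B - {x}. g (card {y\<in>B. (y,b) \<in> r}) (card {y\<in>B. (b,y) \<in> r}))"
    by (rule separation_cost_move_to_front[of g, OF zero])
  also have "\<dots> \<le> separation_cost g C B r"
    unfolding separation_cost_def using \<open>finite C\<close> by (intro sum_mono2) auto
  finally show "separation_cost g C B (move_to_front C x r) \<le> separation_cost g C B r" .
next
  fix C B :: "'a set" and x y z :: 'a and r :: "'a rel"
  assume "finite C" "x \<in> C" "B \<subseteq> C" "x \<notin> B" "y \<in> B" "z \<in> B" "(y,x) \<in> r" "(x,z) \<in> r"
  moreover have "finite B"
    using \<open>finite C\<close> \<open>B \<subseteq> C\<close> finite_subset by blast
  ultimately have "0 < g (card {y\<in>B. (y,x) \<in> r}) (card {y\<in>B. (x,y) \<in> r})"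
    by (intro pos) (auto simp: card_gt_0_iff)
  moreover have "separation_cost g C B r
      = g (card {y\<in>B. (y,x) \<in> r}) (card {y\<in>B. (x,y) \<in> r})
        + (\<Sum>b\<in>C - B - {x}. g (card {y\<in>B. (y,b) \<in> r}) (card {y\<in>B. (b,y) \<in> r}))"
    unfolding separation_cost_def using \<open>finite C\<close> \<open>x \<in> C\<close> \<open>x \<notin> B\<close>
    by (intro sum.remove) auto
  ultimately show "separation_cost g C B (move_to_front C x r) < separation_cost g C B r"
    using separation_cost_move_to_front[of g C x B r, OF zero \<open>finite C\<close> \<open>x \<notin> B\<close>] by linarith
qed

lemma is_interval_converse [simp]: "is_interval A (r\<inverse>) \<longleftrightarrow> is_interval A r"
  unfolding is_interval_def by blast

lemma strict_linear_order_on_converse: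
  "strict_linear_order_on C r \<Longrightarrow> strict_linear_order_on C (r\<inverse>)"
  unfolding strict_linear_order_on_def by (auto simp: total_on_def)

lemma same_side_non_interval:
  assumes "strict_linear_order_on C r" "b \<in> C" "c \<in> C" "b \<noteq> c" "(a,b) \<in> r" "(a,c) \<in> r"
  shows "\<not> is_interval {a,b} r \<or> \<not> is_interval {a,c} r"
proof -
  have irr: "(x,x) \<notin> r" for x
    using assms(1) unfolding strict_linear_order_on_def irrefl_def by blast
  consider "(b,c) \<in> r" | "(c,b) \<in> r"
    using assms(1-4) unfolding strict_linear_order_on_def total_on_def by blast
  then show ?thesis
    using assms(5,6) irr unfolding is_interval_def by cases blast+
qed

text \<open>Two of b, c, d lie on the same side of a, and the nearer one separates the other from a.\<close>

lemma star_has_non_interval: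
  assumes slo: "strict_linear_order_on C r" and sub: "{a,b,c,d} \<subseteq> C"
    and dist: "distinct [a,b,c,d]"
  shows "\<exists>i\<in>{b,c,d}. \<not> is_interval {a,i} r"
proof -
  have side: "(a,i) \<in> r \<or> (a,i) \<in> r\<inverse>" if "i \<in> {b,c,d}" for i
    using slo sub dist that unfolding strict_linear_order_on_def total_on_def by auto
  have "\<exists>i\<in>{b,c,d}. \<exists>j\<in>{b,c,d}. i \<noteq> j \<and> ((a,i) \<in> r \<and> (a,j) \<in> r \<or> (a,i) \<in> r\<inverse> \<and> (a,j) \<in> r\<inverse>)"
    using side[of b] side[of c] side[of d] dist by simp (elim disjE; blast)
  then obtain i j where ij: "i \<in> {b,c,d}" "j \<in> {b,c,d}" "i \<noteq> j"
    and same: "(a,i) \<in> r \<and> (a,j) \<in> r \<or> (a,i) \<in> r\<inverse> \<and> (a,j) \<in> r\<inverse>"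
    by blast
  have "\<not> is_interval {a,i} r \<or> \<not> is_interval {a,j} r"
    using same
  proof
    assume "(a,i) \<in> r \<and> (a,j) \<in> r"
    then show ?thesis using slo ij sub by (intro same_side_non_interval) auto
  next
    assume "(a,i) \<in> r\<inverse> \<and> (a,j) \<in> r\<inverse>"
    then have "\<not> is_interval {a,i} (r\<inverse>) \<or> \<not> is_interval {a,j} (r\<inverse>)"
      using strict_linear_order_on_converse[OF slo] ij sub by (intro same_side_non_interval) auto
    then show ?thesis by simp
  qed
  then show ?thesis
    using ij by blast
qed

lemma finite_MF_windows:
  assumes "finite A"
  shows "finite {card {z\<in>A. (z,x) \<in> r \<or> (y,z) \<in> r} + card {z\<in>C. z \<notin> A \<and> (x,z) \<in> r \<and> (z,y) \<in> r}
                | x y. x \<in> A \<and> y \<in> A \<and> (x = y \<or> (x,y) \<in> r)}"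
proof -
  have "finite ((\<lambda>(x,y). card {z\<in>A. (z,x) \<in> r \<or> (y,z) \<in> r}
                 + card {z\<in>C. z \<notin> A \<and> (x,z) \<in> r \<and> (z,y) \<in> r}) ` (A \<times> A))"
    using assms by simp
  then show ?thesis
    by (rule finite_subset[rotated]) auto
qed

lemma cost_MF_le:
  assumes "finite A" "x \<in> A" "y \<in> A" "x = y \<or> (x,y) \<in> r"
  shows "cost_MF C A r \<le> card {z\<in>A. (z,x) \<in> r \<or> (y,z) \<in> r}
                          + card {z\<in>C. z \<notin> A \<and> (x,z) \<in> r \<and> (z,y) \<in> r}"
  unfolding cost_MF_def using assms by (intro Min_le finite_MF_windows) auto

lemma cost_MF_le_card:
  assumes "r \<in> axes C" "finite A" "x \<in> A"
  shows "cost_MF C A r \<le> card A - 1"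
proof -
  have irr: "(z,z) \<notin> r" and asym: "(z,y) \<in> r \<Longrightarrow> (y,z) \<notin> r" for y z
    using assms(1) unfolding axes_def strict_linear_order_on_def irrefl_def trans_def by blast+
  have inside: "{z\<in>C. z \<notin> A \<and> (x,z) \<in> r \<and> (z,x) \<in> r} = {}"
    using asym by blast
  have "cost_MF C A r \<le> card {z\<in>A. (z,x) \<in> r \<or> (x,z) \<in> r}
                          + card {z\<in>C. z \<notin> A \<and> (x,z) \<in> r \<and> (z,x) \<in> r}"
    using assms(2,3) by (intro cost_MF_le) simp_all
  also have "\<dots> \<le> card (A - {x})"
    unfolding inside using irr assms(2) by (simp, intro card_mono) auto
  finally show ?thesis
    using assms(2,3) by simp
qed

lemma cost_MF_interval_pair:
  assumes "r \<in> axes C" "(a,b) \<in> r" "is_interval {a,b} r"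
  shows "cost_MF C {a,b} r = 0"
proof -
  have irr: "(z,z) \<notin> r" and asym: "(z,y) \<in> r \<Longrightarrow> (y,z) \<notin> r" for y z
    using assms(1) unfolding axes_def strict_linear_order_on_def irrefl_def trans_def by blast+
  have outside: "{z\<in>{a,b}. (z,a) \<in> r \<or> (b,z) \<in> r} = {}"
    using irr asym assms(2) by blast
  have inside: "{z\<in>C. z \<notin> {a,b} \<and> (a,z) \<in> r \<and> (z,b) \<in> r} = {}"
    using assms(3) unfolding is_interval_def by blast
  have "cost_MF C {a,b} r \<le> card {z\<in>{a,b}. (z,a) \<in> r \<or> (b,z) \<in> r}
                              + card {z\<in>C. z \<notin> {a,b} \<and> (a,z) \<in> r \<and> (z,b) \<in> r}"
    using assms(2) by (intro cost_MF_le) auto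
  then show ?thesis
    unfolding outside inside by simp
qed

lemma cost_MF_pos_if_not_interval:
  assumes r: "r \<in> axes C" and "finite C" "A \<subseteq> C" and "\<not> is_interval A r"
  shows "0 < cost_MF C A r"
proof -
  obtain a b c where abc: "a \<in> A" "b \<in> A" "(a,c) \<in> r" "(c,b) \<in> r" "c \<notin> A"
    using assms(4) unfolding is_interval_def by blast
  have finA: "finite A"
    using assms(2,3) finite_subset by blast
  have trans: "trans r" and tot: "total_on C r" and sub: "r \<subseteq> C \<times> C"
    using r unfolding axes_def strict_linear_order_on_def by auto
  have window_pos: "0 < card {z\<in>A. (z,x) \<in> r \<or> (y,z) \<in> r}
                        + card {z\<in>C. z \<notin> A \<and> (x,z) \<in> r \<and> (z,y) \<in> r}"
    if "x \<in> A" "y \<in> A" for x y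
  proof (cases "\<exists>z\<in>A. (z,x) \<in> r \<or> (y,z) \<in> r")
    case True
    then show ?thesis
      using finA by (auto simp: card_gt_0_iff)
  next
    case False
    then have "x = a \<or> (x,a) \<in> r" "b = y \<or> (b,y) \<in> r"
      using tot abc(1,2) that assms(3) unfolding total_on_def by blast+
    then have "(x,c) \<in> r" "(c,y) \<in> r"
      using trans abc(3,4) unfolding trans_def by blast+
    then have "c \<in> {z\<in>C. z \<notin> A \<and> (x,z) \<in> r \<and> (z,y) \<in> r}"
      using sub abc(5) by auto
    then show ?thesis
      using assms(2) by (auto simp: card_gt_0_iff)
  qed
  have "cost_MF C A r \<in> {card {z\<in>A. (z,x) \<in> r \<or> (y,z) \<in> r}
                          + card {z\<in>C. z \<notin> A \<and> (x,z) \<in> r \<and> (z,y) \<in> r}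
                        | x y. x \<in> A \<and> y \<in> A \<and> (x = y \<or> (x,y) \<in> r)}"
    unfolding cost_MF_def using finite_MF_windows[OF finA] abc(1) by (intro Min_in) auto
  then obtain x y where "x \<in> A" "y \<in> A" and cost_eq: "cost_MF C A r
      = card {z\<in>A. (z,x) \<in> r \<or> (y,z) \<in> r} + card {z\<in>C. z \<notin> A \<and> (x,z) \<in> r \<and> (z,y) \<in> r}"
    by blast
  show ?thesis
    unfolding cost_eq by (rule window_pos) fact+
qed

definition cex_candidates :: "nat set" where
  "cex_candidates = {0,1,2,3,4}"

definition cex_profile :: "nat set list" where
  "cex_profile = [{0,1},{0,2},{0,3}]"

definition cex_axis :: "nat rel" where
  "cex_axis = {(1,0),(1,2),(1,4),(1,3),(0,2),(0,4),(0,3),(2,4),(2,3),(4,3)}"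

lemma cex_axis_axes: "cex_axis \<in> axes cex_candidates"
  unfolding axes_def strict_linear_order_on_def trans_def irrefl_def total_on_def
    cex_axis_def cex_candidates_def
  by auto

lemma sum_list_cex_profile:
  "(\<Sum>A\<leftarrow>cex_profile. f A) = f {0,1} + f {0,2} + f {0,3}"
  unfolding cex_profile_def by (simp add: add.assoc)

lemma is_interval_cex_axis: "is_interval {1,0} cex_axis" "is_interval {0,2} cex_axis"
  unfolding is_interval_def cex_axis_def by auto

lemma cex_profile_cost_ge_1:
  fixes cost :: "nat set \<Rightarrow> nat set \<Rightarrow> nat rel \<Rightarrow> nat"
  assumes r: "r \<in> axes cex_candidates"
    and pos: "\<And>A. A \<subseteq> cex_candidates \<Longrightarrow> \<not> is_interval A r \<Longrightarrow> 0 < cost cex_candidates A r"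
  shows "1 \<le> (\<Sum>A\<leftarrow>cex_profile. cost cex_candidates A r)"
proof -
  have "strict_linear_order_on cex_candidates r"
    using r unfolding axes_def by blast
  then obtain i where i: "i \<in> {1,2,3}" and "\<not> is_interval {0,i} r"
    by (rule star_has_non_interval[where a = 0 and b = 1 and c = 2 and d = 3, THEN bexE])
       (auto simp: cex_candidates_def)
  then have "0 < cost cex_candidates {0,i} r"
    by (intro pos) (auto simp: cex_candidates_def)
  moreover have "cost cex_candidates {0,i} r \<le> (\<Sum>A\<leftarrow>cex_profile. cost cex_candidates A r)"
    unfolding sum_list_cex_profile using i by (elim insertE emptyE) simp_all
  ultimately show ?thesis
    by linarith
qed

lemma clearanceD:
  assumes "clearance cost" "r \<in> scoring_rule cost C P"
    and "finite C" "is_profile C P" "x \<in> C" "\<forall>A\<in>set P. x \<notin> A" "A \<in> set P" "y \<in> A" "z \<in> A"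
  shows "\<not> ((y,x) \<in> r \<and> (x,z) \<in> r)"
  using assms unfolding clearance_def by blast

lemma not_clearance_by_cex:
  fixes cost :: "nat set \<Rightarrow> nat set \<Rightarrow> nat rel \<Rightarrow> nat"
  assumes pos: "\<And>r A. r \<in> axes cex_candidates \<Longrightarrow> A \<subseteq> cex_candidates \<Longrightarrow> \<not> is_interval A r
      \<Longrightarrow> 0 < cost cex_candidates A r"
    and cex_axis_cost: "(\<Sum>A\<leftarrow>cex_profile. cost cex_candidates A cex_axis) \<le> 1"
  shows "\<not> clearance cost"
proof
  assume "clearance cost"
  moreover have "cex_axis \<in> scoring_rule cost cex_candidates cex_profile"
    unfolding scoring_rule_def
  proof (intro CollectI conjI ballI cex_axis_axes)
    fix r assume "r \<in> axes cex_candidates"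
    then have "1 \<le> (\<Sum>A\<leftarrow>cex_profile. cost cex_candidates A r)"
      by (rule cex_profile_cost_ge_1) (rule pos[OF \<open>r \<in> axes cex_candidates\<close>])
    then show "(\<Sum>A\<leftarrow>cex_profile. cost cex_candidates A cex_axis) \<le> (\<Sum>A\<leftarrow>cex_profile. cost cex_candidates A r)"
      using cex_axis_cost by linarith
  qed
  ultimately have "\<not> ((0,4) \<in> cex_axis \<and> (4,3) \<in> cex_axis)"
    by (rule clearanceD[where A = "{0,3}"])
       (simp_all add: cex_candidates_def cex_profile_def is_profile_def)
  then show False
    by (simp add: cex_axis_def)
qed

lemma cost_VD_not_clearance: "\<not> clearance (cost_VD :: nat set \<Rightarrow> nat set \<Rightarrow> nat rel \<Rightarrow> nat)"
proof (rule not_clearance_by_cex)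
  show "(\<Sum>A\<leftarrow>cex_profile. cost_VD cex_candidates A cex_axis) \<le> 1"
    using is_interval_cex_axis
    unfolding sum_list_cex_profile cost_VD_def by (simp add: insert_commute)
qed (simp add: cost_VD_def)

lemma cost_MF_not_clearance: "\<not> clearance (cost_MF :: nat set \<Rightarrow> nat set \<Rightarrow> nat rel \<Rightarrow> nat)"
proof (rule not_clearance_by_cex)
  have "cost_MF cex_candidates {1,0} cex_axis = 0" "cost_MF cex_candidates {0,2} cex_axis = 0"
    using cex_axis_axes is_interval_cex_axis
    by (auto intro!: cost_MF_interval_pair simp: cex_axis_def)
  moreover have "cost_MF cex_candidates {0,3} cex_axis \<le> 1"
    using cost_MF_le_card[OF cex_axis_axes, of "{0,3}" 0] by simp
  ultimately show "(\<Sum>A\<leftarrow>cex_profile. cost_MF cex_candidates A cex_axis) \<le> 1"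
    unfolding sum_list_cex_profile by (simp add: insert_commute)
next
  show "0 < cost_MF cex_candidates A r"
    if "r \<in> axes cex_candidates" "A \<subseteq> cex_candidates" "\<not> is_interval A r" for r A
    using that by (intro cost_MF_pos_if_not_interval) (auto simp: cex_candidates_def)
qed

theorem mainTheorem7:
  shows "clearance (cost_BC :: 'a set \<Rightarrow> 'a set \<Rightarrow> 'a rel \<Rightarrow> nat)
       \<and> clearance (cost_MS :: 'a set \<Rightarrow> 'a set \<Rightarrow> 'a rel \<Rightarrow> nat)
       \<and> clearance (cost_FT :: 'a set \<Rightarrow> 'a set \<Rightarrow> 'a rel \<Rightarrow> nat)
       \<and> \<not> clearance (cost_VD :: nat set \<Rightarrow> nat set \<Rightarrow> nat rel \<Rightarrow> nat)
       \<and> \<not> clearance (cost_MF :: nat set \<Rightarrow> nat set \<Rightarrow> nat rel \<Rightarrow> nat)"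
proof (intro conjI)
  show "clearance (cost_MS :: 'a set \<Rightarrow> 'a set \<Rightarrow> 'a rel \<Rightarrow> nat)"
    unfolding cost_MS_eq_separation_cost by (rule separation_cost_clearance) auto
  show "clearance (cost_FT :: 'a set \<Rightarrow> 'a set \<Rightarrow> 'a rel \<Rightarrow> nat)"
    unfolding cost_FT_eq_separation_cost by (rule separation_cost_clearance) auto
qed (fact cost_BC_clearance cost_VD_not_clearance cost_MF_not_clearance)+

end
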